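(* Let $n$ and $d$ be positive integers and let $\vec{G}$ be a digraph of order $n$ whose minimum outdegree is at least $d$. Then $\vec{G}$ contains a subdivision of the complete digraph of order $\lfloor d^2/(8n^{3/2}) \rfloor$.
   Context: Digraphs have no loops, and for any ordered pair of vertices $x,y$ there is at most one edge directed from $x$ to $y$ (there may also be an edge from $y$ to $x$). The complete digraph of order $\ell$ has $\ell$ vertices and, for every ordered pair $(v,w)$ of distinct vertices, an edge directed from $v$ to $w$. A digraph $\vec{H}$ is a subdivision of a digraph $\vec{F}$ if $\vec{H}$ can be obtained from $\vec{F}$ by replacing each edge $\vec{xy}$ of $\vec{F}$ by a directed path from $x$ to $y$, such that the paths corresponding to distinct edges are internally vertex-disjoint (and their interior vertices are new). "Contains a subdivision" means has a subdigraph that is a subdivision. *)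

theory Defs
  imports Main Complex_Main
begin

definition digraph :: "'a set \<Rightarrow> ('a \<times> 'a) set \<Rightarrow> bool" where
  "digraph V E \<longleftrightarrow> finite V \<and> E \<subseteq> V \<times> V \<and> (\<forall>x. (x, x) \<notin> E)"

definition out_degree :: "('a \<times> 'a) set \<Rightarrow> 'a \<Rightarrow> nat" where
  "out_degree E v = card {w. (v, w) \<in> E}"

definition dipath :: "('a \<times> 'a) set \<Rightarrow> 'a \<Rightarrow> 'a \<Rightarrow> 'a list \<Rightarrow> bool" where
  "dipath E x y p \<longleftrightarrow> length p \<ge> 2 \<and> hd p = x \<and> last p = y \<and> distinct p \<and>
     (\<forall>i. Suc i < length p \<longrightarrow> (p ! i, p ! Suc i) \<in> E)"

definition interior :: "'a list \<Rightarrow> 'a set" where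
  "interior p = set (butlast (tl p))"

definition contains_complete_subdivision :: "'a set \<Rightarrow> ('a \<times> 'a) set \<Rightarrow> nat \<Rightarrow> bool" where
  "contains_complete_subdivision V E l \<longleftrightarrow>
     (\<exists>B P. B \<subseteq> V \<and> card B = l \<and>
        (\<forall>x\<in>B. \<forall>y\<in>B. x \<noteq> y \<longrightarrow> dipath E x y (P (x, y)) \<and> set (P (x, y)) \<subseteq> V
                                     \<and> interior (P (x, y)) \<inter> B = {}) \<and>
        (\<forall>x\<in>B. \<forall>y\<in>B. \<forall>x'\<in>B. \<forall>y'\<in>B. x \<noteq> y \<longrightarrow> x' \<noteq> y' \<longrightarrow> (x, y) \<noteq> (x', y') \<longrightarrow>
            interior (P (x, y)) \<inter> interior (P (x', y')) = {}))"

end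

theory Submission
  imports Defs
begin

(* Relax the out-degree bound by c for every deleted vertex: call a nonempty T \<subseteq> V dense if
  each vertex of T has at least d - c (n - |T|) out-neighbours in T, and let S be a dense set of
  minimum size. By minimality every nonempty proper subset R of S has a vertex with more than
  c (|S| - |R|) out-neighbours in S - R. Hence breadth-first search inside S, even with a set U
  of vertices forbidden, leaves at most (1 - c)^k |S| + |U| / c vertices unreached after k rounds,
  and every vertex of larger in-degree in S is reached by a path with at most k interior vertices
  avoiding U. In- and out-degrees in S have the same sum, so S has l vertices of in-degree above
  this threshold; they are the branch vertices, and the l (l - 1) paths are found greedily, each
  avoiding the branch vertices and the interiors of the earlier ones. Writing n = a^4, the choice
  c = sqrt (2 l) / a and k close to 4 a^2 / (5 l) makes the counting work when 8 l n^(3/2) \<le> d^2. *)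

definition out_degree_in :: "('a \<times> 'a) set \<Rightarrow> 'a set \<Rightarrow> 'a \<Rightarrow> nat" where
  "out_degree_in E T v = card {w\<in>T. (v, w) \<in> E}"

definition in_degree_in :: "('a \<times> 'a) set \<Rightarrow> 'a set \<Rightarrow> 'a \<Rightarrow> nat" where
  "in_degree_in E T v = card {w\<in>T. (w, v) \<in> E}"

lemma sum_in_degree_in_eq_sum_out_degree_in:
  assumes "finite T"
  shows "(\<Sum>v\<in>T. in_degree_in E T v) = (\<Sum>v\<in>T. out_degree_in E T v)"
proof -
  have "(\<Sum>v\<in>T. out_degree_in E T v) = card (Sigma T (\<lambda>v. {w\<in>T. (v, w) \<in> E}))"
    using assms by (simp add: out_degree_in_def)
  also have "Sigma T (\<lambda>v. {w\<in>T. (v, w) \<in> E}) = prod.swap ` Sigma T (\<lambda>v. {w\<in>T. (w, v) \<in> E})"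
    by (auto simp: image_iff)
  also have "card \<dots> = card (Sigma T (\<lambda>v. {w\<in>T. (w, v) \<in> E}))"
    by (rule card_image) (simp add: inj_on_def)
  also have "\<dots> = (\<Sum>v\<in>T. in_degree_in E T v)"
    using assms by (simp add: in_degree_in_def)
  finally show ?thesis by simp
qed

lemma min_out_degree_less_card:
  assumes "digraph V E" "V \<noteq> {}" "\<forall>v\<in>V. d \<le> out_degree E v"
  shows "d < card V"
proof -
  obtain v where "v \<in> V" using assms(2) by blast
  have "{w. (v, w) \<in> E} \<subseteq> V - {v}"
    using assms(1) unfolding digraph_def by auto
  then have "out_degree E v \<le> card (V - {v})"
    using assms(1) unfolding digraph_def out_degree_def by (metis card_mono finite_Diff)
  also have "\<dots> < card V"
    using assms(1) \<open>v \<in> V\<close> unfolding digraph_def by (blast intro: card_Diff1_less)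
  finally show ?thesis
    using assms(3) \<open>v \<in> V\<close> by fastforce
qed

lemma interior_eq_set_minus_ends:
  assumes "distinct p" "length p \<ge> 2"
  shows "interior p = set p - {hd p, last p}"
proof -
  obtain a q where p: "p = a # q" using assms by (cases p) auto
  then obtain r b where "q = r @ [b]"
    using assms by (cases q rule: rev_exhaust) auto
  with p assms show ?thesis unfolding interior_def by auto
qed

lemma interior_subset_set: "interior p \<subseteq> set p"
  unfolding interior_def by (cases p) (auto dest: in_set_butlastD)

lemma card_interior_le: "card (interior p) \<le> length p - 2"
  unfolding interior_def using card_length[of "butlast (tl p)"] by simp

lemma contains_complete_subdivision_le_one:
  assumes "l \<le> 1" "l \<le> card V"
  shows "contains_complete_subdivision V E l"
proof -
  obtain B where B: "B \<subseteq> V" "card B = l" "finite B"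
    using assms(2) obtain_subset_with_card_n by metis
  then have "x = y" if "x \<in> B" "y \<in> B" for x y
    using assms(1) that card_le_Suc0_iff_eq[of B] by auto
  with B show ?thesis unfolding contains_complete_subdivision_def by blast
qed

fun out_ball :: "('a \<times> 'a) set \<Rightarrow> 'a set \<Rightarrow> 'a \<Rightarrow> nat \<Rightarrow> 'a set" where
  "out_ball E W x 0 = {x}"
| "out_ball E W x (Suc k) = out_ball E W x k \<union> {v\<in>W. \<exists>z\<in>out_ball E W x k. (z, v) \<in> E}"

lemma center_in_out_ball: "x \<in> out_ball E W x k"
  by (induction k) auto

lemma out_ball_subset: "x \<in> W \<Longrightarrow> out_ball E W x k \<subseteq> W"
  by (induction k) auto

lemma out_ball_mono: "out_ball E W x k \<subseteq> out_ball E W x (Suc k)"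
  by auto

lemma out_ball_path:
  assumes "v \<in> out_ball E W x k"
  obtains p where "p \<noteq> []" "hd p = x" "last p = v" "distinct p" "set p \<subseteq> out_ball E W x k"
    "length p \<le> Suc k" "\<forall>i. Suc i < length p \<longrightarrow> (p ! i, p ! Suc i) \<in> E"
  using assms
proof (induction k arbitrary: v thesis)
  case 0
  then show ?case by (intro "0.prems"(1)[of "[x]"]) auto
next
  case (Suc k)
  show ?case
  proof (cases "v \<in> out_ball E W x k")
    case True
    with Suc.IH show ?thesis
      by (metis Suc.prems(1) le_SucI out_ball_mono subset_trans)
  next
    case False
    with Suc.prems(2) obtain z where z: "z \<in> out_ball E W x k" "(z, v) \<in> E" by auto
    from Suc.IH[OF _ z(1)] obtain p where p: "p \<noteq> []" "hd p = x" "last p = z" "distinct p"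
      "set p \<subseteq> out_ball E W x k" "length p \<le> Suc k"
      "\<forall>i. Suc i < length p \<longrightarrow> (p ! i, p ! Suc i) \<in> E" by blast
    have "((p @ [v]) ! i, (p @ [v]) ! Suc i) \<in> E" if "Suc i < length (p @ [v])" for i
    proof (cases "Suc i < length p")
      case True
      with p(7) show ?thesis by (simp add: nth_append)
    next
      case False
      with that have "i = length p - 1" "Suc i = length p" by auto
      with p(1,3) z(2) show ?thesis by (simp add: nth_append last_conv_nth)
    qed
    moreover have "v \<notin> set p" using False p(5) by auto
    ultimately show ?thesis
      using p Suc.prems out_ball_mono[of E W x k] by (intro Suc.prems(1)[of "p @ [v]"]) auto
  qed
qed

definition path_system ::
  "('a \<times> 'a) set \<Rightarrow> 'a set \<Rightarrow> 'a set \<Rightarrow> nat \<Rightarrow> ('a \<times> 'a) set \<Rightarrow> ('a \<times> 'a \<Rightarrow> 'a list) \<Rightarrow> bool" where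
  "path_system E S B k Q P \<longleftrightarrow>
     (\<forall>q\<in>Q. dipath E (fst q) (snd q) (P q) \<and> set (P q) \<subseteq> S \<and>
        interior (P q) \<inter> B = {} \<and> card (interior (P q)) \<le> k) \<and>
     (\<forall>q\<in>Q. \<forall>q'\<in>Q. q \<noteq> q' \<longrightarrow> interior (P q) \<inter> interior (P q') = {})"

lemma path_system_empty: "path_system E S B k {} P"
  by (simp add: path_system_def)

lemma path_system_insert:
  assumes "path_system E S B k Q P"
    and "dipath E x y p" "set p \<subseteq> S" "card (interior p) \<le> k"
    and "interior p \<inter> (B \<union> (\<Union>q\<in>Q. interior (P q))) = {}"
  shows "path_system E S B k (insert (x, y) Q) (P((x, y) := p))"
proof -
  let ?P = "P((x, y) := p)"
  have "\<forall>q\<in>insert (x, y) Q. dipath E (fst q) (snd q) (?P q) \<and> set (?P q) \<subseteq> S \<and>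
      interior (?P q) \<inter> B = {} \<and> card (interior (?P q)) \<le> k"
    using assms unfolding path_system_def by auto
  moreover have "interior (?P q) \<inter> interior (?P q') = {}"
    if "q \<in> insert (x, y) Q" "q' \<in> insert (x, y) Q" "q \<noteq> q'" for q q'
  proof -
    have "interior p \<inter> interior (P r) = {}" if "r \<in> Q" for r
      using assms(5) that by blast
    moreover have "interior (P r) \<inter> interior (P r') = {}" if "r \<in> Q" "r' \<in> Q" "r \<noteq> r'" for r r'
      using assms(1) that unfolding path_system_def by blast
    ultimately show ?thesis
      using that by (cases "q = (x, y)"; cases "q' = (x, y)") (auto simp: Int_commute)
  qed
  ultimately show ?thesis
    unfolding path_system_def by blast
qed

lemma card_interiors_path_system:
  assumes "path_system E S B k Q P" "finite Q"
  shows "card (\<Union>q\<in>Q. interior (P q)) \<le> k * card Q"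
proof -
  have "card (\<Union>q\<in>Q. interior (P q)) \<le> (\<Sum>q\<in>Q. card (interior (P q)))"
    using assms(2) by (rule card_UN_le)
  also have "\<dots> \<le> (\<Sum>q\<in>Q. k)"
    using assms(1) unfolding path_system_def by (intro sum_mono) auto
  finally show ?thesis by (simp add: mult.commute)
qed

lemma interiors_subset_path_system:
  assumes "path_system E S B k Q P"
  shows "(\<Union>q\<in>Q. interior (P q)) \<subseteq> S"
proof -
  have "interior (P q) \<subseteq> S" if "q \<in> Q" for q
    using that assms interior_subset_set[of "P q"] unfolding path_system_def by (meson subset_trans)
  then show ?thesis by blast
qed

lemma contains_complete_subdivision_if_path_system:
  assumes "B \<subseteq> S" "S \<subseteq> V" "card B = l"
    and "path_system E S B k {(x, y). x \<in> B \<and> y \<in> B \<and> x \<noteq> y} P"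
  shows "contains_complete_subdivision V E l"
  unfolding contains_complete_subdivision_def
proof (intro exI conjI)
  show "B \<subseteq> V" "card B = l" using assms(1-3) by auto
  have "dipath E x y (P (x, y)) \<and> set (P (x, y)) \<subseteq> S \<and> interior (P (x, y)) \<inter> B = {}"
    if "x \<in> B" "y \<in> B" "x \<noteq> y" for x y
    using assms(4) that unfolding path_system_def by auto
  with assms(2) show "\<forall>x\<in>B. \<forall>y\<in>B. x \<noteq> y \<longrightarrow>
      dipath E x y (P (x, y)) \<and> set (P (x, y)) \<subseteq> V \<and> interior (P (x, y)) \<inter> B = {}"
    by blast
  have "interior (P q) \<inter> interior (P q') = {}"
    if "q \<in> {(x, y). x \<in> B \<and> y \<in> B \<and> x \<noteq> y}" "q' \<in> {(x, y). x \<in> B \<and> y \<in> B \<and> x \<noteq> y}" "q \<noteq> q'"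
    for q q'
    using assms(4) that unfolding path_system_def by blast
  then show "\<forall>x\<in>B. \<forall>y\<in>B. \<forall>x'\<in>B. \<forall>y'\<in>B. x \<noteq> y \<longrightarrow> x' \<noteq> y' \<longrightarrow> (x, y) \<noteq> (x', y') \<longrightarrow>
      interior (P (x, y)) \<inter> interior (P (x', y')) = {}"
    by blast
qed

definition dense_subset :: "'a set \<Rightarrow> ('a \<times> 'a) set \<Rightarrow> real \<Rightarrow> real \<Rightarrow> 'a set \<Rightarrow> bool" where
  "dense_subset V E d c T \<longleftrightarrow> T \<subseteq> V \<and> T \<noteq> {} \<and>
     (\<forall>v\<in>T. d - c * (real (card V) - real (card T)) \<le> real (out_degree_in E T v))"

locale minimal_dense_subset =
  fixes V :: "'a set" and E :: "('a \<times> 'a) set" and d c :: real and S :: "'a set"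
  assumes finite_V: "finite V"
    and c_pos: "0 < c" and c_le_1: "c \<le> 1"
    and dense_S: "dense_subset V E d c S"
    and minimal_S: "\<And>T. dense_subset V E d c T \<Longrightarrow> card S \<le> card T"
begin

lemma S_subset: "S \<subseteq> V" and S_nonempty: "S \<noteq> {}"
  using dense_S by (auto simp: dense_subset_def)

lemma finite_S: "finite S"
  using S_subset finite_V by (rule finite_subset)

lemma out_degree_in_S: "v \<in> S \<Longrightarrow> d - c * (real (card V) - real (card S)) \<le> real (out_degree_in E S v)"
  using dense_S by (simp add: dense_subset_def)

lemma expands:
  assumes "R \<subseteq> S" "R \<noteq> {}" "R \<noteq> S"
  obtains v where "v \<in> R" "c * (real (card S) - real (card R)) < real (card {w\<in>S - R. (v, w) \<in> E})"
proof -
  have "finite R" using assms(1) finite_S by (rule finite_subset)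
  have "card R < card S" using assms finite_S by (simp add: psubset_card_mono)
  then have "\<not> dense_subset V E d c R" using minimal_S by (meson not_le)
  then obtain v where v: "v \<in> R" "real (out_degree_in E R v) < d - c * (real (card V) - real (card R))"
    using assms(1,2) S_subset unfolding dense_subset_def by (meson not_le order_trans)
  have "{w\<in>S. (v, w) \<in> E} = {w\<in>R. (v, w) \<in> E} \<union> {w\<in>S - R. (v, w) \<in> E}"
    using assms(1) by auto
  then have "out_degree_in E S v = out_degree_in E R v + card {w\<in>S - R. (v, w) \<in> E}"
    unfolding out_degree_in_def using finite_S \<open>finite R\<close> by (simp add: card_Un_disjoint disjoint_iff)
  with out_degree_in_S[of v] v assms(1) show thesis
    by (intro that[OF v(1)]) (auto simp: algebra_simps)
qed

lemma card_out_ball_Suc: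
  assumes "U \<subseteq> S" "x \<in> S - U"
  shows "real (card S) - real (card (out_ball E (S - U) x (Suc k)))
    \<le> (1 - c) * (real (card S) - real (card (out_ball E (S - U) x k))) + real (card U)"
proof -
  let ?R = "out_ball E (S - U) x k" and ?R' = "out_ball E (S - U) x (Suc k)"
  have R: "?R \<subseteq> ?R'" "?R' \<subseteq> S" "?R \<subseteq> S" "?R \<noteq> {}"
    using out_ball_mono out_ball_subset[of x "S - U" E] center_in_out_ball[of x E "S - U" k] assms
    by auto
  have fin: "finite ?R'" "finite ?R"
    using finite_subset[OF R(2) finite_S] finite_subset[OF R(1)] by blast+
  have "c * (real (card S) - real (card ?R)) \<le> real (card U) + real (card (?R' - ?R))"
  proof (cases "?R = S")
    case False
    then obtain v where v: "v \<in> ?R" "c * (real (card S) - real (card ?R)) < real (card {w\<in>S - ?R. (v, w) \<in> E})"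
      using expands[of ?R] R False by blast
    have "{w\<in>S - ?R. (v, w) \<in> E} \<subseteq> U \<union> (?R' - ?R)"
      using v(1) by auto
    then have "card {w\<in>S - ?R. (v, w) \<in> E} \<le> card (U \<union> (?R' - ?R))"
      using assms(1) finite_S fin by (intro card_mono) (auto intro: finite_subset)
    also have "\<dots> \<le> card U + card (?R' - ?R)"
      by (rule card_Un_le)
    finally have "card {w\<in>S - ?R. (v, w) \<in> E} \<le> card U + card (?R' - ?R)" .
    with v(2) show ?thesis by linarith
  qed simp
  moreover have "card (?R' - ?R) = card ?R' - card ?R" "card ?R \<le> card ?R'"
    using fin R(1) by (auto simp: card_Diff_subset card_mono)
  ultimately show ?thesis by (simp add: algebra_simps)
qed

lemma card_out_ball_lower:
  assumes "U \<subseteq> S" "x \<in> S - U"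
  shows "real (card S) - real (card (out_ball E (S - U) x k)) \<le> (1 - c) ^ k * real (card S) + real (card U) / c"
proof (induction k)
  case 0
  have "0 \<le> real (card U) / c" using c_pos by simp
  then show ?case by simp
next
  case (Suc k)
  have "real (card S) - real (card (out_ball E (S - U) x (Suc k)))
        \<le> (1 - c) * (real (card S) - real (card (out_ball E (S - U) x k))) + real (card U)"
    using assms by (rule card_out_ball_Suc)
  also have "\<dots> \<le> (1 - c) * ((1 - c) ^ k * real (card S) + real (card U) / c) + real (card U)"
    using Suc c_le_1 by (intro add_right_mono mult_left_mono) auto
  also have "\<dots> = (1 - c) ^ Suc k * real (card S) + real (card U) / c"
    using c_pos by (simp add: field_simps)
  finally show ?case .
qed

lemma dipath_avoiding:
  assumes "U \<subseteq> S" "x \<in> S - U" "y \<in> S - U" "x \<noteq> y"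
    and "(1 - c) ^ k * real (card S) + real (card U) / c < real (in_degree_in E S y)"
  obtains p where "dipath E x y p" "set p \<subseteq> S - U" "length p \<le> k + 2"
proof -
  let ?R = "out_ball E (S - U) x k"
  have R: "?R \<subseteq> S" using out_ball_subset[of x "S - U" E k] assms(2) by auto
  have "\<exists>z\<in>?R. (z, y) \<in> E"
  proof (rule ccontr)
    assume "\<not> ?thesis"
    then have "{z\<in>S. (z, y) \<in> E} \<subseteq> S - ?R" by auto
    then have "in_degree_in E S y \<le> card (S - ?R)"
      unfolding in_degree_in_def using finite_S by (intro card_mono) auto
    also have "\<dots> = card S - card ?R"
      using R finite_S by (simp add: card_Diff_subset finite_subset)
    finally have "real (in_degree_in E S y) \<le> real (card S) - real (card ?R)"
      using card_mono[OF finite_S R] by linarith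
    with card_out_ball_lower[OF assms(1,2), of k] assms(5) show False by linarith
  qed
  with assms(3) have "y \<in> out_ball E (S - U) x (Suc k)" by auto
  then obtain p where p: "p \<noteq> []" "hd p = x" "last p = y" "distinct p"
    "set p \<subseteq> out_ball E (S - U) x (Suc k)" "length p \<le> Suc (Suc k)"
    "\<forall>i. Suc i < length p \<longrightarrow> (p ! i, p ! Suc i) \<in> E"
    by (rule out_ball_path)
  have "length p \<noteq> 1"
    using p(2,3) assms(4) by (auto simp: length_Suc_conv)
  with p(1) have "length p \<ge> 2"
    by (cases p) (auto simp: Suc_le_eq)
  moreover have "set p \<subseteq> S - U"
    using p(5) out_ball_subset[of x "S - U" E "Suc k"] assms(2) by auto
  ultimately show thesis
    using p by (intro that[of p]) (auto simp: dipath_def)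
qed

lemma path_system_exists:
  assumes B: "B \<subseteq> S" "card B = l" and high: "\<forall>y\<in>B. \<theta> \<le> real (in_degree_in E S y)"
    and key: "(1 - c) ^ k * real (card S) + (real l + real k * real l * real l) / c < \<theta>"
    and "finite Q" "Q \<subseteq> {(x, y). x \<in> B \<and> y \<in> B \<and> x \<noteq> y}"
  shows "\<exists>P. path_system E S B k Q P"
  using assms(5,6)
proof (induction Q rule: finite_induct)
  case empty
  show ?case using path_system_empty by blast
next
  case (insert q Q)
  then obtain P where P: "path_system E S B k Q P" by auto
  obtain x y where q: "q = (x, y)" by (cases q)
  have xy: "x \<in> B" "y \<in> B" "x \<noteq> y" using insert.prems q by auto
  have "finite B" using B(1) finite_S by (rule finite_subset)
  define I where "I = (\<Union>q'\<in>Q. interior (P q'))"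
  define U where "U = (B \<union> I) - {x, y}"
  have "I \<subseteq> S" unfolding I_def using P by (rule interiors_subset_path_system)
  with B(1) have "U \<subseteq> S" unfolding U_def by auto
  have "finite I" using \<open>I \<subseteq> S\<close> finite_S by (rule finite_subset)
  have "card Q \<le> card (B \<times> B)"
    using insert.prems \<open>finite B\<close> by (intro card_mono) auto
  have "card I \<le> k * card Q"
    unfolding I_def using P insert(1) by (rule card_interiors_path_system)
  also have "\<dots> \<le> k * (l * l)"
    using \<open>card Q \<le> card (B \<times> B)\<close> B(2) by (simp add: card_cartesian_product)
  finally have "card I \<le> k * (l * l)" .
  have "card U \<le> card (B \<union> I)"
    unfolding U_def using \<open>finite B\<close> \<open>finite I\<close> by (intro card_mono) auto
  also have "\<dots> \<le> card B + card I"
    by (rule card_Un_le)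
  finally have "card U \<le> l + k * (l * l)"
    using \<open>card I \<le> k * (l * l)\<close> B(2) by linarith
  then have "real (card U) / c \<le> (real l + real k * real l * real l) / c"
    using c_pos by (intro divide_right_mono) (auto simp flip: of_nat_mult of_nat_add)
  with key high xy(2)
  have "(1 - c) ^ k * real (card S) + real (card U) / c < real (in_degree_in E S y)"
    by fastforce
  then obtain p where p: "dipath E x y p" "set p \<subseteq> S - U" "length p \<le> k + 2"
    using dipath_avoiding[OF \<open>U \<subseteq> S\<close> _ _ xy(3)] xy(1,2) B(1) unfolding U_def by blast
  have "interior p = set p - {x, y}"
    using p(1) interior_eq_set_minus_ends unfolding dipath_def by auto
  with p(2) have "interior p \<inter> (B \<union> I) = {}"
    unfolding U_def by auto
  moreover have "card (interior p) \<le> k"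
    using card_interior_le[of p] p(3) by simp
  ultimately have "path_system E S B k (insert (x, y) Q) (P((x, y) := p))"
    using P p(1,2) unfolding I_def by (intro path_system_insert) auto
  then show ?case unfolding q by blast
qed

lemma card_high_in_degree:
  assumes "0 \<le> \<theta>"
  shows "d - c * real (card V) - \<theta> \<le> real (card {v\<in>S. \<theta> \<le> real (in_degree_in E S v)})"
proof -
  define H where "H = {v\<in>S. \<theta> \<le> real (in_degree_in E S v)}"
  have H: "H \<subseteq> S" unfolding H_def by auto
  have "d - c * real (card V) \<le> real (out_degree_in E S v)" if "v \<in> S" for v
  proof -
    have "0 \<le> c * real (card S)" using c_pos by simp
    with out_degree_in_S[OF that] show ?thesis
      unfolding right_diff_distrib by linarith
  qed
  then have "real (card S) * (d - c * real (card V)) \<le> (\<Sum>v\<in>S. real (out_degree_in E S v))"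
    using sum_mono[of S "\<lambda>_. d - c * real (card V)"] by simp
  also have "\<dots> = (\<Sum>v\<in>S. real (in_degree_in E S v))"
    using sum_in_degree_in_eq_sum_out_degree_in[OF finite_S, of E] by (simp flip: of_nat_sum)
  also have "\<dots> = (\<Sum>v\<in>H. real (in_degree_in E S v)) + (\<Sum>v\<in>S - H. real (in_degree_in E S v))"
    using sum.subset_diff[OF H finite_S] by (simp add: add.commute)
  also have "\<dots> \<le> (\<Sum>v\<in>H. real (card S)) + (\<Sum>v\<in>S - H. \<theta>)"
    using finite_S by (intro add_mono sum_mono) (auto simp: H_def in_degree_in_def card_mono)
  also have "\<dots> \<le> real (card S) * (real (card H) + \<theta>)"
    using assms card_mono[OF finite_S, of "S - H"] by (simp add: algebra_simps mult_left_mono)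
  finally have "real (card S) * (d - c * real (card V)) \<le> real (card S) * (real (card H) + \<theta>)" .
  moreover have "0 < card S" using finite_S S_nonempty by (simp add: card_gt_0_iff)
  ultimately show ?thesis unfolding H_def by simp
qed

lemma contains_complete_subdivision_if_threshold:
  assumes "0 \<le> \<theta>" "real l + \<theta> \<le> d - c * real (card V)"
    and "(1 - c) ^ k * real (card S) + (real l + real k * real l * real l) / c < \<theta>"
  shows "contains_complete_subdivision V E l"
proof -
  have "l \<le> card {v\<in>S. \<theta> \<le> real (in_degree_in E S v)}"
    using card_high_in_degree[OF assms(1)] assms(2) by linarith
  then obtain B where B: "B \<subseteq> {v\<in>S. \<theta> \<le> real (in_degree_in E S v)}" "card B = l" "finite B"
    by (meson obtain_subset_with_card_n)
  have "{(x, y). x \<in> B \<and> y \<in> B \<and> x \<noteq> y} \<subseteq> B \<times> B" by auto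
  then have "finite {(x, y). x \<in> B \<and> y \<in> B \<and> x \<noteq> y}"
    using B(3) by (simp add: finite_subset)
  then obtain P where "path_system E S B k {(x, y). x \<in> B \<and> y \<in> B \<and> x \<noteq> y} P"
    using path_system_exists[of B l \<theta> k] B assms(3) by auto
  with B S_subset show ?thesis
    by (intro contains_complete_subdivision_if_path_system) auto
qed

end

lemma minimal_dense_subset_exists:
  assumes "finite V" "0 < c" "c \<le> 1" "dense_subset V E d c V"
  obtains S where "minimal_dense_subset V E d c S"
proof -
  obtain S where "dense_subset V E d c S" "\<forall>T. dense_subset V E d c T \<longrightarrow> card S \<le> card T"
    using ex_has_least_nat[of "dense_subset V E d c" V card] assms(4) by blast
  with assms(1-3) show thesis
    by (intro that) (simp add: minimal_dense_subset_def)
qed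

lemma one_minus_power_le:
  fixes c :: real
  assumes "0 < c" "c \<le> 1" "0 < k"
  shows "(1 - c) ^ k \<le> 2 / (c * k) ^ 2"
proof -
  have "(1 - c) ^ k \<le> exp (- c) ^ k"
    using assms exp_ge_add_one_self[of "- c"] by (intro power_mono) auto
  also have "\<dots> = 1 / exp (c * k)"
    by (simp add: exp_of_nat_mult[symmetric] exp_minus field_simps)
  also have "\<dots> \<le> 1 / ((c * k) ^ 2 / 2)"
  proof -
    have "0 \<le> c * k" using assms by simp
    then have "(c * k) ^ 2 / 2 \<le> exp (c * k)"
      using exp_lower_Taylor_quadratic[of "c * k"] by linarith
    then show ?thesis using assms by (intro divide_left_mono) auto
  qed
  finally show ?thesis by simp
qed

lemma contains_complete_subdivision_if_parameters:
  fixes c :: real and d k l :: nat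
  assumes "digraph V E" "V \<noteq> {}" "\<forall>v\<in>V. d \<le> out_degree E v"
    and "0 < c" "c \<le> 1" "0 < k"
    and "2 * real (card V) / (c * real k) ^ 2 + (real l + real k * real l * real l) / c
           + real l + c * real (card V) < real d"
  shows "contains_complete_subdivision V E l"
proof -
  have "finite V" "E \<subseteq> V \<times> V" using assms(1) by (auto simp: digraph_def)
  then have "out_degree_in E V v = out_degree E v" for v
    unfolding out_degree_in_def out_degree_def by (metis (no_types, lifting) SigmaD2 subsetD)
  with assms(2,3) have "dense_subset V E d c V"
    by (simp add: dense_subset_def)
  then obtain S where "minimal_dense_subset V E d c S"
    using minimal_dense_subset_exists \<open>finite V\<close> assms(4,5) by blast
  then interpret minimal_dense_subset V E d c S .
  have "(1 - c) ^ k * real (card S) \<le> (1 - c) ^ k * real (card V)"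
    using c_le_1 card_mono[OF finite_V S_subset] by (intro mult_left_mono) auto
  also have "\<dots> \<le> 2 * real (card V) / (c * real k) ^ 2"
    using mult_right_mono[OF one_minus_power_le[OF assms(4-6)], of "real (card V)"] by simp
  finally have "(1 - c) ^ k * real (card S) \<le> 2 * real (card V) / (c * real k) ^ 2" .
  moreover have "0 \<le> (1 - c) ^ k * real (card S) + (real l + real k * real l * real l) / c"
    using c_pos c_le_1 by simp
  ultimately show ?thesis
    using assms(7) by (intro contains_complete_subdivision_if_threshold[where \<theta> = "d - c * real (card V) - l" and k = k]) auto
qed

lemma parameter_inequality:
  fixes a b d l k :: real
  assumes a: "0 < a" and b: "0 < b" "b ^ 2 = 2 * l" and l: "2 \<le> l"
    and d: "0 \<le> d" "d < a ^ 4" "8 * l * a ^ 6 \<le> d ^ 2"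
    and k: "4 * a ^ 2 / (5 * l) \<le> k" "k \<le> 4 * a ^ 2 / (5 * l) + 1"
  shows "b / a \<le> 1"
    and "2 * a ^ 4 / (b / a * k) ^ 2 + (l + k * l * l) / (b / a) + l + b / a * a ^ 4 < d"
proof -
  have "a ^ 6 * (8 * l) \<le> d ^ 2" using d(3) by (simp add: mult.commute)
  also have "\<dots> < (a ^ 4) ^ 2" using d(1,2) by (intro power_strict_mono) auto
  also have "\<dots> = a ^ 6 * a ^ 2" by (simp flip: power_mult power_add)
  finally have "8 * l < a ^ 2"
    using a by (metis mult_less_cancel_left_pos zero_less_power)
  then have a_sq: "16 < a ^ 2" "b ^ 2 < a ^ 2 / 4"
    using l b(2) by auto
  then have "b ^ 2 < (a / 2) ^ 2"
    by (simp add: power_divide)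
  moreover have "0 \<le> a / 2" using a by simp
  ultimately have ba: "b < a / 2"
    by (rule power_less_imp_less_base)
  then show "b / a \<le> 1" using a by (simp add: divide_le_eq)
  have "(2 * b * a ^ 3) ^ 2 = 4 * b ^ 2 * a ^ 6"
    by (simp add: power_mult_distrib power_mult[symmetric])
  also have "\<dots> \<le> d ^ 2"
    using b(2) d(3) by simp
  finally have "2 * b * a ^ 3 \<le> d"
    using d(1) by (rule power2_le_imp_le)
  then have d_ge: "2 * (a ^ 3 * b) \<le> d"
    by (simp add: mult_ac)
  have "8 * a / (5 * b) \<le> b / a * k"
  proof -
    have "8 * a / (5 * b) = b / a * (4 * a ^ 2 / (5 * l))"
      using a b l by (simp add: field_simps power2_eq_square)
    also have "\<dots> \<le> b / a * k" using k(1) a b by (intro mult_left_mono) auto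
    finally show ?thesis .
  qed
  moreover have "0 < 8 * a / (5 * b)" using a b by simp
  ultimately have "2 * a ^ 4 / (b / a * k) ^ 2 \<le> 2 * a ^ 4 / (8 * a / (5 * b)) ^ 2"
    using a by (intro divide_left_mono power_mono mult_pos_pos) auto
  also have "\<dots> = 25 / 32 * a ^ 2 * b * b"
    using a b by (simp add: field_simps power2_eq_square power4_eq_xxxx)
  also have "\<dots> \<le> 25 / 32 * a ^ 2 * b * (a / 2)"
    using ba a b by (intro mult_left_mono) auto
  also have "\<dots> = 25 / 64 * (a ^ 3 * b)"
    by (simp add: power2_eq_square power3_eq_cube)
  finally have deficit_bound: "2 * a ^ 4 / (b / a * k) ^ 2 \<le> 25 / 64 * (a ^ 3 * b)" .
  have l_eq: "l = b ^ 2 / 2" using b(2) by simp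
  have "(l + k * l * l) / (b / a) = (l + k * l * l) * a / b"
    by simp
  also have "\<dots> \<le> (l + (4 * a ^ 2 / (5 * l) + 1) * l * l) * a / b"
    using k(2) a b l by (intro divide_right_mono mult_right_mono add_left_mono) auto
  also have "\<dots> = a * b / 2 + a * b * b ^ 2 / 4 + 2 / 5 * (a ^ 3 * b)"
    unfolding l_eq using b(1) by (simp add: field_simps power2_eq_square power3_eq_cube)
  also have "\<dots> \<le> a * b * (a ^ 2 / 16) / 2 + a * b * (a ^ 2 / 4) / 4 + 2 / 5 * (a ^ 3 * b)"
    using a_sq a b by (intro add_mono divide_right_mono mult_left_mono) auto
  also have "\<dots> = 79 / 160 * (a ^ 3 * b)"
    by (simp add: power2_eq_square power3_eq_cube field_simps)
  finally have forbidden_bound: "(l + k * l * l) / (b / a) \<le> 79 / 160 * (a ^ 3 * b)" .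
  have "l = b * b / 2" using l_eq by (simp add: power2_eq_square)
  also have "\<dots> \<le> b * (a / 2) / 2"
    using ba b by (intro divide_right_mono mult_left_mono) auto
  also have "\<dots> \<le> a * b * (a ^ 2 / 16) / 4"
    using a_sq a b by (simp add: field_simps)
  also have "\<dots> = 1 / 64 * (a ^ 3 * b)"
    by (simp add: power2_eq_square power3_eq_cube)
  finally have l_bound: "l \<le> 1 / 64 * (a ^ 3 * b)" .
  have cn_eq: "b / a * a ^ 4 = a ^ 3 * b"
    using a by (simp add: power3_eq_cube power4_eq_xxxx)
  have "0 < a ^ 3 * b" using a b by simp
  \<comment> \<open>the four terms add up to at most 19/10 a^3 b, while d \<ge> 2 a^3 b\<close>
  with deficit_bound forbidden_bound l_bound cn_eq d_ge show "2 * a ^ 4 / (b / a * k) ^ 2 + (l + k * l * l) / (b / a) + l + b / a * a ^ 4 < d"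
    by linarith
qed

lemma suitable_parameters_exist:
  fixes n d l :: nat
  assumes "2 \<le> l" "d < n" "8 * real l * real n powr (3 / 2) \<le> real d ^ 2"
  obtains c :: real and k :: nat where "0 < c" "c \<le> 1" "0 < k"
    "2 * real n / (c * real k) ^ 2 + (real l + real k * real l * real l) / c + real l + c * real n < real d"
proof -
  define a where "a = real n powr (1 / 4)"
  define b where "b = sqrt (2 * real l)"
  define k where "k = nat \<lceil>4 * a ^ 2 / (5 * real l)\<rceil>"
  have "0 < n" using assms(2) by simp
  then have a: "0 < a" "a ^ 4 = real n" "a ^ 6 = real n powr (3 / 2)"
    unfolding a_def by (simp_all flip: powr_realpow add: powr_powr)
  have b: "0 < b" "b ^ 2 = 2 * real l"
    unfolding b_def using assms(1) by simp_all
  have "0 < 4 * a ^ 2 / (5 * real l)"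
    using a assms(1) by simp
  then have k: "4 * a ^ 2 / (5 * real l) \<le> real k" "real k \<le> 4 * a ^ 2 / (5 * real l) + 1" "0 < k"
    unfolding k_def by linarith+
  have "real d < a ^ 4" "8 * real l * a ^ 6 \<le> real d ^ 2"
    using assms(2,3) a(2,3) by simp_all
  from parameter_inequality[OF a(1) b _ _ this k(1,2)] assms(1)
  have "b / a \<le> 1"
    and "2 * real n / (b / a * k) ^ 2 + (real l + k * real l * real l) / (b / a) + real l
           + b / a * real n < real d"
    unfolding a(2) by simp_all
  with a(1) b(1) k(3) show thesis
    by (intro that[of "b / a" k]) simp_all
qed

theorem theorem2:
  fixes V :: "'a set" and E :: "('a \<times> 'a) set" and n d :: nat
  assumes "digraph V E"
    and "card V = n" and "n > 0" and "d > 0"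
    and "\<forall>v\<in>V. out_degree E v \<ge> d"
  shows "contains_complete_subdivision V E
           (nat \<lfloor>real d ^ 2 / (8 * real n powr (3/2))\<rfloor>)"
proof -
  define l where "l = nat \<lfloor>real d ^ 2 / (8 * real n powr (3/2))\<rfloor>"
  have "V \<noteq> {}" using assms(2,3) by auto
  show ?thesis
  proof (cases "l \<le> 1")
    case True
    moreover have "l \<le> card V" using True assms(2,3) by linarith
    ultimately show ?thesis
      unfolding l_def by (rule contains_complete_subdivision_le_one)
  next
    case False
    have "d < n"
      using min_out_degree_less_card[OF assms(1) \<open>V \<noteq> {}\<close>] assms(2,5) by simp
    have "real l \<le> real d ^ 2 / (8 * real n powr (3/2))"
      unfolding l_def by (simp add: of_nat_floor)
    then have "8 * real l * real n powr (3/2) \<le> real d ^ 2"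
      using assms(3) by (simp add: pos_le_divide_eq mult_ac)
    moreover have "2 \<le> l" using False by simp
    ultimately obtain c k where "0 < c" "c \<le> 1" "0 < k"
      "2 * real n / (c * real k) ^ 2 + (real l + real k * real l * real l) / c + real l + c * real n < real d"
      using suitable_parameters_exist \<open>d < n\<close> by metis
    then show ?thesis
      using contains_complete_subdivision_if_parameters[OF assms(1) \<open>V \<noteq> {}\<close>] assms(2,5)
      unfolding l_def by simp
  qed
qed

end
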